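(* For every integer $n\geq 1$, $$c_n(231,1432 : 231)=c_n(312,3214 : 312)=L_{n+1}-\left\lceil \tfrac{n}{2}\right\rceil-1,$$ where $L_m$ is the $m$-th Lucas number ($L_0=2$, $L_1=1$, $L_m=L_{m-1}+L_{m-2}$ for $m\ge 2$).
   Context: $S_n$ is the symmetric group on $[n]=\{1,\dots,n\}$, and a permutation $\pi\in S_n$ is written in one-line notation $\pi=\pi_1\pi_2\cdots\pi_n$ with $\pi_i=\pi(i)$. For $\tau\in S_k$, $k\le n$, $\pi$ contains $\tau$ if there are indices $i_1<\dots<i_k$ with $\pi_{i_s}>\pi_{i_t}$ iff $\tau_s>\tau_t$ for all $1\le s<t\le k$; otherwise $\pi$ avoids $\tau$. $\pi^2$ denotes the composition $\pi\circ\pi$. For patterns $\sigma_1,\sigma_2,\rho$, $c_n(\sigma_1,\sigma_2 : \rho)$ denotes the number of permutations $\pi\in S_n$ such that $\pi$ avoids both $\sigma_1$ and $\sigma_2$ and $\pi^2$ avoids $\rho$. *)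

theory Defs
  imports Complex_Main "HOL-Combinatorics.Permutations"
begin

text \<open>Permutations of [n] = {1..n} are functions nat => nat with p permutes {1..n};
  one-line notation pi_i = p i. A pattern tau in S_k is given as a list
  [tau_1, ..., tau_k] (tau_s = tau ! (s - 1)).\<close>

definition contains :: "(nat \<Rightarrow> nat) \<Rightarrow> nat \<Rightarrow> nat list \<Rightarrow> bool" where
  "contains p n tau \<longleftrightarrow>
     (\<exists>i :: nat \<Rightarrow> nat. strict_mono_on {1..length tau} i \<and> i ` {1..length tau} \<subseteq> {1..n} \<and>
        (\<forall>s\<in>{1..length tau}. \<forall>t\<in>{1..length tau}. s < t \<longrightarrow>
           (p (i s) > p (i t) \<longleftrightarrow> tau ! (s - 1) > tau ! (t - 1))))"

definition avoids :: "(nat \<Rightarrow> nat) \<Rightarrow> nat \<Rightarrow> nat list \<Rightarrow> bool" where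
  "avoids p n tau \<longleftrightarrow> \<not> contains p n tau"

definition c_count :: "nat \<Rightarrow> nat list \<Rightarrow> nat list \<Rightarrow> nat list \<Rightarrow> nat" where
  "c_count n s1 s2 rho = card {p. p permutes {1..n} \<and> avoids p n s1 \<and> avoids p n s2
                                  \<and> avoids (p \<circ> p) n rho}"

fun lucas :: "nat \<Rightarrow> nat" where
  "lucas 0 = 2"
| "lucas (Suc 0) = 1"
| "lucas (Suc (Suc m)) = lucas (Suc m) + lucas m"

end

theory Submission
  imports Defs
begin

(* Reverse-complement, p \<mapsto> \<rho> \<circ> p \<circ> \<rho> with \<rho> i = n + 1 - i, turns 231 into 312 and 1432 into
   3214 and commutes with squaring, so both counts agree. Let A_n be the permutations of [n]
   avoiding 231 and 1432 whose square avoids 231. For n \<ge> 3 the value n of p \<in> A_n sits at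
   position n, n - 1 or 1. At position n it can be deleted, leaving an element of A_(n-1). At an
   inner position k, 231 puts everything left of k below everything right of k and 1432 makes p
   increase right of k, so p n = n - 1; then 231 in p\<^sup>2 forces k = n - 1, and p is an element of
   A_(n-2) followed by the descent 21. At position 1, with 1 at position r, 231 in p\<^sup>2 (whose
   maximum sits at r) separates the values of p\<^sup>2 left and right of r; this pins p down to
   n (n-1) ... (m+1) 1 2 ... m with 2m \<le> n. Hence a_n = a_(n-1) + a_(n-2) + \<lfloor>n/2\<rfloor>, and with
   a_1 = 1, a_2 = 2 this gives a_n = L_(n+1) - \<lceil>n/2\<rceil> - 1. *)

lemma strict_mono_on_gap:
  fixes g :: "nat \<Rightarrow> nat"
  assumes "strict_mono_on {a..b} g" and "a \<le> i" and "i \<le> j" and "j \<le> b"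
  shows "g i + (j - i) \<le> g j"
  using \<open>i \<le> j\<close> \<open>j \<le> b\<close>
proof (induction j rule: dec_induct)
  case (step j)
  then have "g j < g (Suc j)"
    using assms(1,2) by (auto intro: strict_mono_onD)
  with step show ?case by simp
qed simp

lemma strict_mono_on_onto_interval:
  fixes g :: "nat \<Rightarrow> nat"
  assumes "strict_mono_on {a..b} g" and "\<And>i. i \<in> {a..b} \<Longrightarrow> g i \<in> {c..c + (b - a)}"
    and "i \<in> {a..b}"
  shows "g i = c + (i - a)"
  using strict_mono_on_gap[OF assms(1), of a i] strict_mono_on_gap[OF assms(1), of i b]
    assms(2)[of a] assms(2)[of b] assms(3)
  by auto

lemma lower_part_eq_interval:
  fixes X Y :: "nat set"
  assumes XY: "X \<union> Y = {lo..hi}" and less: "\<And>x y. x \<in> X \<Longrightarrow> y \<in> Y \<Longrightarrow> x < y"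
  shows "X = {lo..<lo + card X}"
proof -
  have fin: "finite X"
    using XY finite_subset[of X "{lo..hi}"] by blast
  have "x < lo + card X" if "x \<in> X" for x
  proof -
    have "{lo..x} \<subseteq> X"
    proof
      fix y assume y: "y \<in> {lo..x}"
      moreover have "x \<le> hi"
        using XY that by (metis UnI1 atLeastAtMost_iff)
      ultimately have "y \<in> X \<union> Y"
        using XY by auto
      then show "y \<in> X"
        using less[OF that] y by fastforce
    qed
    then have "card {lo..x} \<le> card X"
      using fin by (rule card_mono[rotated])
    then show ?thesis by simp
  qed
  then have "X \<subseteq> {lo..<lo + card X}"
    using XY by auto
  then show ?thesis
    by (intro card_subset_eq) simp_all
qed

section \<open>Occurrences of 231 and 1432\<close>

lemma contains_three:
  "contains p n [x\<^sub>1, x\<^sub>2, x\<^sub>3] \<longleftrightarrow> (\<exists>a b c. 1 \<le> a \<and> a < b \<and> b < c \<and> c \<le> n \<and>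
     (p a > p b \<longleftrightarrow> x\<^sub>1 > x\<^sub>2) \<and> (p a > p c \<longleftrightarrow> x\<^sub>1 > x\<^sub>3) \<and> (p b > p c \<longleftrightarrow> x\<^sub>2 > x\<^sub>3))"
  (is "_ \<longleftrightarrow> (\<exists>a b c. ?occ a b c)")
proof
  let ?x = "[x\<^sub>1, x\<^sub>2, x\<^sub>3]"
  have length: "length ?x = 3" by simp
  assume "contains p n ?x"
  then obtain i where mono: "strict_mono_on {1..3} i" and range: "i ` {1..3} \<subseteq> {1..n}"
    and order: "\<forall>s\<in>{1..3}. \<forall>t\<in>{1..3}. s < t \<longrightarrow> (p (i s) > p (i t) \<longleftrightarrow> ?x ! (s - 1) > ?x ! (t - 1))"
    unfolding contains_def length by blast
  have "i 1 < i 2" "i 2 < i 3"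
    using mono by (auto simp: strict_mono_on_def)
  moreover have "1 \<le> i 1" "i 3 \<le> n"
    using range by (auto simp: image_subset_iff)
  moreover have "p (i 1) > p (i 2) \<longleftrightarrow> x\<^sub>1 > x\<^sub>2" "p (i 1) > p (i 3) \<longleftrightarrow> x\<^sub>1 > x\<^sub>3"
    "p (i 2) > p (i 3) \<longleftrightarrow> x\<^sub>2 > x\<^sub>3"
    using order[rule_format, of 1 2] order[rule_format, of 1 3] order[rule_format, of 2 3]
    by auto
  ultimately have "?occ (i 1) (i 2) (i 3)"
    by blast
  then show "\<exists>a b c. ?occ a b c" by blast
next
  assume "\<exists>a b c. ?occ a b c"
  then obtain a b c where occ: "?occ a b c" by blast
  define i where "i s = (if s = 1 then a else if s = 2 then b else c)" for s :: nat
  have three: "{1..3::nat} = {1, 2, 3}" by auto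
  show "contains p n [x\<^sub>1, x\<^sub>2, x\<^sub>3]"
    unfolding contains_def using occ
    by (intro exI[of _ i]) (auto simp: three i_def strict_mono_on_def)
qed

definition avoids_231 :: "(nat \<Rightarrow> nat) \<Rightarrow> nat \<Rightarrow> bool" where
  "avoids_231 p n \<longleftrightarrow>
     (\<forall>a b c. 1 \<le> a \<longrightarrow> a < b \<longrightarrow> b < c \<longrightarrow> c \<le> n \<longrightarrow> \<not> (p c < p a \<and> p a < p b))"

lemma avoids_231_iff:
  assumes "inj_on p {1..n}"
  shows "avoids p n [2, 3, 1] \<longleftrightarrow> avoids_231 p n"
proof -
  have "\<not> p b < p a \<and> p c < p a \<and> p c < p b \<longleftrightarrow> p c < p a \<and> p a < p b"
    if "1 \<le> a" "a < b" "b < c" "c \<le> n" for a b c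
    using inj_onD[OF assms, of a b] that by fastforce
  then show ?thesis
    unfolding avoids_def contains_three avoids_231_def by simp blast
qed

lemma contains_four:
  "contains p n [x\<^sub>1, x\<^sub>2, x\<^sub>3, x\<^sub>4] \<longleftrightarrow> (\<exists>a b c d. 1 \<le> a \<and> a < b \<and> b < c \<and> c < d \<and> d \<le> n \<and>
     (p a > p b \<longleftrightarrow> x\<^sub>1 > x\<^sub>2) \<and> (p a > p c \<longleftrightarrow> x\<^sub>1 > x\<^sub>3) \<and> (p a > p d \<longleftrightarrow> x\<^sub>1 > x\<^sub>4) \<and>
     (p b > p c \<longleftrightarrow> x\<^sub>2 > x\<^sub>3) \<and> (p b > p d \<longleftrightarrow> x\<^sub>2 > x\<^sub>4) \<and> (p c > p d \<longleftrightarrow> x\<^sub>3 > x\<^sub>4))"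
  (is "_ \<longleftrightarrow> (\<exists>a b c d. ?occ a b c d)")
proof
  let ?x = "[x\<^sub>1, x\<^sub>2, x\<^sub>3, x\<^sub>4]"
  have length: "length ?x = 4" by simp
  assume "contains p n ?x"
  then obtain i where mono: "strict_mono_on {1..4} i" and range: "i ` {1..4} \<subseteq> {1..n}"
    and order: "\<forall>s\<in>{1..4}. \<forall>t\<in>{1..4}. s < t \<longrightarrow> (p (i s) > p (i t) \<longleftrightarrow> ?x ! (s - 1) > ?x ! (t - 1))"
    unfolding contains_def length by blast
  have "i 1 < i 2" "i 2 < i 3" "i 3 < i 4"
    using mono by (auto simp: strict_mono_on_def)
  moreover have "1 \<le> i 1" "i 4 \<le> n"
    using range by (auto simp: image_subset_iff)
  moreover have "p (i 1) > p (i 2) \<longleftrightarrow> x\<^sub>1 > x\<^sub>2" "p (i 1) > p (i 3) \<longleftrightarrow> x\<^sub>1 > x\<^sub>3"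
    "p (i 1) > p (i 4) \<longleftrightarrow> x\<^sub>1 > x\<^sub>4" "p (i 2) > p (i 3) \<longleftrightarrow> x\<^sub>2 > x\<^sub>3"
    "p (i 2) > p (i 4) \<longleftrightarrow> x\<^sub>2 > x\<^sub>4" "p (i 3) > p (i 4) \<longleftrightarrow> x\<^sub>3 > x\<^sub>4"
    using order[rule_format, of 1 2] order[rule_format, of 1 3] order[rule_format, of 1 4]
      order[rule_format, of 2 3] order[rule_format, of 2 4] order[rule_format, of 3 4]
    by auto
  ultimately have "?occ (i 1) (i 2) (i 3) (i 4)"
    by blast
  then show "\<exists>a b c d. ?occ a b c d" by blast
next
  assume "\<exists>a b c d. ?occ a b c d"
  then obtain a b c d where occ: "?occ a b c d" by blast
  define i where "i s = (if s = 1 then a else if s = 2 then b else if s = 3 then c else d)" for s :: nat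
  have four: "{1..4::nat} = {1, 2, 3, 4}" by auto
  show "contains p n [x\<^sub>1, x\<^sub>2, x\<^sub>3, x\<^sub>4]"
    unfolding contains_def using occ
    by (intro exI[of _ i]) (auto simp: four i_def strict_mono_on_def)
qed

definition avoids_1432 :: "(nat \<Rightarrow> nat) \<Rightarrow> nat \<Rightarrow> bool" where
  "avoids_1432 p n \<longleftrightarrow> (\<forall>a b c d. 1 \<le> a \<longrightarrow> a < b \<longrightarrow> b < c \<longrightarrow> c < d \<longrightarrow> d \<le> n \<longrightarrow>
     \<not> (p a < p d \<and> p d < p c \<and> p c < p b))"

lemma avoids_1432_iff:
  assumes "inj_on p {1..n}"
  shows "avoids p n [1, 4, 3, 2] \<longleftrightarrow> avoids_1432 p n"
proof -
  have "\<not> p b < p a \<and> \<not> p c < p a \<and> \<not> p d < p a \<and> p c < p b \<and> p d < p b \<and> p d < p c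
      \<longleftrightarrow> p a < p d \<and> p d < p c \<and> p c < p b"
    if "1 \<le> a" "a < b" "b < c" "c < d" "d \<le> n" for a b c d
  proof -
    have "p a \<noteq> p d"
      using inj_onD[OF assms, of a d] that by auto
    then show ?thesis by auto
  qed
  then show ?thesis
    unfolding avoids_def contains_four avoids_1432_def by simp blast
qed

lemma avoids_231I:
  assumes "\<And>a b c. 1 \<le> a \<Longrightarrow> a < b \<Longrightarrow> b < c \<Longrightarrow> c \<le> n \<Longrightarrow> p c < p a \<Longrightarrow> p a < p b \<Longrightarrow> False"
  shows "avoids_231 p n"
  using assms by (auto simp: avoids_231_def)

lemma avoids_231D:
  assumes "avoids_231 p n" and "1 \<le> a" "a < b" "b < c" "c \<le> n" and "p c < p a" "p a < p b"
  shows False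
  using assms by (auto simp: avoids_231_def)

lemma avoids_1432I:
  assumes "\<And>a b c d. 1 \<le> a \<Longrightarrow> a < b \<Longrightarrow> b < c \<Longrightarrow> c < d \<Longrightarrow> d \<le> n \<Longrightarrow>
             p a < p d \<Longrightarrow> p d < p c \<Longrightarrow> p c < p b \<Longrightarrow> False"
  shows "avoids_1432 p n"
  using assms by (auto simp: avoids_1432_def)

lemma avoids_1432D:
  assumes "avoids_1432 p n" and "1 \<le> a" "a < b" "b < c" "c < d" "d \<le> n"
    and "p a < p d" "p d < p c" "p c < p b"
  shows False
  using assms by (auto simp: avoids_1432_def)

lemma avoids_231_mono: "avoids_231 p n \<Longrightarrow> m \<le> n \<Longrightarrow> avoids_231 p m"
  by (auto simp: avoids_231_def)

lemma avoids_1432_mono: "avoids_1432 p n \<Longrightarrow> m \<le> n \<Longrightarrow> avoids_1432 p m"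
  by (auto simp: avoids_1432_def)

lemma avoids_231_cong:
  assumes "\<And>x. x \<in> {1..n} \<Longrightarrow> p x = q x"
  shows "avoids_231 p n \<longleftrightarrow> avoids_231 q n"
proof -
  have "p c < p a \<and> p a < p b \<longleftrightarrow> q c < q a \<and> q a < q b"
    if "1 \<le> a" "a < b" "b < c" "c \<le> n" for a b c
    using assms that by simp
  then show ?thesis
    unfolding avoids_231_def by blast
qed

lemma avoids_1432_cong:
  assumes "\<And>x. x \<in> {1..n} \<Longrightarrow> p x = q x"
  shows "avoids_1432 p n \<longleftrightarrow> avoids_1432 q n"
proof -
  have "p a < p d \<and> p d < p c \<and> p c < p b \<longleftrightarrow> q a < q d \<and> q d < q c \<and> q c < q b"
    if "1 \<le> a" "a < b" "b < c" "c < d" "d \<le> n" for a b c d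
    using assms that by simp
  then show ?thesis
    unfolding avoids_1432_def by blast
qed

(* An occurrence of 231 or 1432 meeting the tail would need three of its entries there. *)
lemma avoids_231_high_tail:
  assumes "n \<le> N" "N \<le> n + 2"
    and low: "\<And>x. x \<in> {1..n} \<Longrightarrow> p x \<le> n" and high: "\<And>y. y \<in> {n<..N} \<Longrightarrow> n < p y"
  shows "avoids_231 p N \<longleftrightarrow> avoids_231 p n"
proof
  assume av: "avoids_231 p n"
  show "avoids_231 p N"
  proof (rule avoids_231I)
    fix a b c assume abc: "1 \<le> a" "a < b" "b < c" "c \<le> N" "p c < p a" "p a < p b"
    show False
    proof (cases "c \<le> n")
      case True
      then show False using avoids_231D[OF av] abc by blast
    next
      case False
      then show False using low[of a] high[of c] abc assms(2) by auto
    qed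
  qed
qed (use assms avoids_231_mono in blast)

lemma avoids_1432_high_tail:
  assumes "n \<le> N" "N \<le> n + 2"
    and low: "\<And>x. x \<in> {1..n} \<Longrightarrow> p x \<le> n" and high: "\<And>y. y \<in> {n<..N} \<Longrightarrow> n < p y"
  shows "avoids_1432 p N \<longleftrightarrow> avoids_1432 p n"
proof
  assume av: "avoids_1432 p n"
  show "avoids_1432 p N"
  proof (rule avoids_1432I)
    fix a b c d assume abcd: "1 \<le> a" "a < b" "b < c" "c < d" "d \<le> N"
      "p a < p d" "p d < p c" "p c < p b"
    show False
    proof (cases "d \<le> n")
      case True
      then show False using avoids_1432D[OF av] abcd by blast
    next
      case False
      then show False
        using low[of b] low[of c] high[of c] high[of d] abcd assms(2) by (cases "c \<le> n") auto
    qed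
  qed
qed (use assms avoids_1432_mono in blast)

section \<open>Reverse-complement\<close>

definition flip :: "nat \<Rightarrow> nat \<Rightarrow> nat" where
  "flip n i = (if i \<in> {1..n} then n + 1 - i else i)"

definition rev_compl :: "nat \<Rightarrow> (nat \<Rightarrow> nat) \<Rightarrow> nat \<Rightarrow> nat" where
  "rev_compl n p = flip n \<circ> p \<circ> flip n"

definition pattern_rev_compl :: "nat list \<Rightarrow> nat list" where
  "pattern_rev_compl \<tau> = rev (map (\<lambda>x. length \<tau> + 1 - x) \<tau>)"

lemma flip_flip [simp]: "flip n (flip n i) = i"
  unfolding flip_def by auto

lemma flip_permutes: "flip n permutes {1..n}"
  by (rule inj_imp_permutes) (auto simp: flip_def inj_on_def)

lemma rev_compl_permutes: "p permutes {1..n} \<Longrightarrow> rev_compl n p permutes {1..n}"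
  unfolding rev_compl_def by (intro permutes_compose flip_permutes)

lemma rev_compl_rev_compl [simp]: "rev_compl n (rev_compl n p) = p"
  by (simp add: rev_compl_def fun_eq_iff)

lemma rev_compl_comp: "rev_compl n p \<circ> rev_compl n p = rev_compl n (p \<circ> p)"
  by (simp add: rev_compl_def fun_eq_iff)

lemma rev_compl_mirror:
  assumes "p permutes {1..n}" and "x \<in> {1..n}"
  shows "rev_compl n p (n + 1 - x) = n + 1 - p x"
  using assms permutes_in_image[OF assms(1), of x] by (auto simp: rev_compl_def flip_def)

lemma pattern_rev_compl_less_iff:
  assumes "set \<tau> \<subseteq> {1..length \<tau>}" and "s < length \<tau>" "t < length \<tau>"
  shows "pattern_rev_compl \<tau> ! s < pattern_rev_compl \<tau> ! t \<longleftrightarrow>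
    \<tau> ! (length \<tau> - Suc t) < \<tau> ! (length \<tau> - Suc s)"
proof -
  have "\<tau> ! (length \<tau> - Suc s) \<le> length \<tau>" "\<tau> ! (length \<tau> - Suc t) \<le> length \<tau>"
    using assms by (auto simp: subset_iff)
  then show ?thesis
    using assms(2,3) by (auto simp: pattern_rev_compl_def rev_nth)
qed

lemma pattern_rev_compl_pattern_rev_compl:
  "set \<tau> \<subseteq> {1..length \<tau>} \<Longrightarrow> pattern_rev_compl (pattern_rev_compl \<tau>) = \<tau>"
  unfolding pattern_rev_compl_def rev_map rev_rev_ident map_map by (rule map_idI) auto

lemma pattern_rev_compl_range:
  "set \<tau> \<subseteq> {1..length \<tau>} \<Longrightarrow> set (pattern_rev_compl \<tau>) \<subseteq> {1..length (pattern_rev_compl \<tau>)}"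
  by (auto simp: pattern_rev_compl_def dest!: subsetD)

lemma contains_rev_compl:
  assumes perm: "p permutes {1..n}" and \<tau>: "set \<tau> \<subseteq> {1..length \<tau>}" and "contains p n \<tau>"
  shows "contains (rev_compl n p) n (pattern_rev_compl \<tau>)"
proof -
  define k where "k = length \<tau>"
  obtain i where mono: "strict_mono_on {1..k} i" and range: "i ` {1..k} \<subseteq> {1..n}"
    and order: "\<And>s t. s \<in> {1..k} \<Longrightarrow> t \<in> {1..k} \<Longrightarrow> s < t \<Longrightarrow>
                  p (i s) > p (i t) \<longleftrightarrow> \<tau> ! (s - 1) > \<tau> ! (t - 1)"
    using \<open>contains p n \<tau>\<close> by (auto simp: contains_def k_def)
  define j where "j s = n + 1 - i (k + 1 - s)" for s
  have mirror: "k + 1 - s \<in> {1..k}" if "s \<in> {1..k}" for s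
    using that by auto
  have i_range: "i (k + 1 - s) \<in> {1..n}" if "s \<in> {1..k}" for s
    using range mirror[OF that] by blast
  have "strict_mono_on {1..k} j"
  proof (rule strict_mono_onI)
    fix s t assume "s \<in> {1..k}" "t \<in> {1..k}" "s < t"
    then have "i (k + 1 - t) < i (k + 1 - s)"
      using mono mirror by (auto intro: strict_mono_onD)
    then show "j s < j t"
      using i_range[OF \<open>s \<in> {1..k}\<close>] i_range[OF \<open>t \<in> {1..k}\<close>] by (auto simp: j_def)
  qed
  moreover have "j ` {1..k} \<subseteq> {1..n}"
  proof (rule image_subsetI)
    fix s assume "s \<in> {1..k}"
    then show "j s \<in> {1..n}"
      using i_range[of s] by (auto simp: j_def)
  qed
  moreover have "rev_compl n p (j s) > rev_compl n p (j t) \<longleftrightarrow>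
      pattern_rev_compl \<tau> ! (s - 1) > pattern_rev_compl \<tau> ! (t - 1)"
    if st: "s \<in> {1..k}" "t \<in> {1..k}" "s < t" for s t
  proof -
    have "rev_compl n p (j s) = n + 1 - p (i (k + 1 - s))" "rev_compl n p (j t) = n + 1 - p (i (k + 1 - t))"
      unfolding j_def using rev_compl_mirror[OF perm i_range] st by blast+
    moreover have "p (i (k + 1 - s)) \<in> {1..n}" "p (i (k + 1 - t)) \<in> {1..n}"
      using i_range st permutes_in_image[OF perm] by blast+
    ultimately have "rev_compl n p (j s) > rev_compl n p (j t) \<longleftrightarrow> p (i (k + 1 - t)) > p (i (k + 1 - s))"
      by (auto; linarith)
    also have "\<dots> \<longleftrightarrow> \<tau> ! (k - t) > \<tau> ! (k - s)"
      using order[OF mirror[OF st(2)] mirror[OF st(1)]] st by simp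
    also have "\<dots> \<longleftrightarrow> pattern_rev_compl \<tau> ! (s - 1) > pattern_rev_compl \<tau> ! (t - 1)"
      using pattern_rev_compl_less_iff[OF \<tau>, of "t - 1" "s - 1"] st by (simp add: k_def)
    finally show ?thesis .
  qed
  ultimately show ?thesis
    unfolding contains_def by (auto simp: pattern_rev_compl_def k_def)
qed

lemma avoids_rev_compl_iff:
  assumes "p permutes {1..n}" and "set \<tau> \<subseteq> {1..length \<tau>}"
  shows "avoids (rev_compl n p) n (pattern_rev_compl \<tau>) \<longleftrightarrow> avoids p n \<tau>"
  using contains_rev_compl[OF assms]
    contains_rev_compl[OF rev_compl_permutes[OF assms(1)] pattern_rev_compl_range[OF assms(2)]]
  by (auto simp: avoids_def pattern_rev_compl_pattern_rev_compl[OF assms(2)])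

lemma c_count_rev_compl:
  assumes "set \<sigma>\<^sub>1 \<subseteq> {1..length \<sigma>\<^sub>1}" "set \<sigma>\<^sub>2 \<subseteq> {1..length \<sigma>\<^sub>2}" "set \<rho> \<subseteq> {1..length \<rho>}"
  shows "c_count n (pattern_rev_compl \<sigma>\<^sub>1) (pattern_rev_compl \<sigma>\<^sub>2) (pattern_rev_compl \<rho>)
       = c_count n \<sigma>\<^sub>1 \<sigma>\<^sub>2 \<rho>"
proof -
  define A where "A = {p. p permutes {1..n} \<and> avoids p n \<sigma>\<^sub>1 \<and> avoids p n \<sigma>\<^sub>2 \<and> avoids (p \<circ> p) n \<rho>}"
  define B where "B = {p. p permutes {1..n} \<and> avoids p n (pattern_rev_compl \<sigma>\<^sub>1)
    \<and> avoids p n (pattern_rev_compl \<sigma>\<^sub>2) \<and> avoids (p \<circ> p) n (pattern_rev_compl \<rho>)}"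
  have in_B: "rev_compl n p \<in> B \<longleftrightarrow> p \<in> A" for p
  proof (cases "p permutes {1..n}")
    case True
    then show ?thesis
      using assms rev_compl_permutes[OF True] permutes_compose[OF True True]
      by (simp add: A_def B_def rev_compl_comp avoids_rev_compl_iff)
  next
    case False
    then have "\<not> rev_compl n p permutes {1..n}"
      using rev_compl_permutes rev_compl_rev_compl by metis
    then show ?thesis
      using False by (simp add: A_def B_def)
  qed
  have "bij_betw (rev_compl n) A B"
    by (rule bij_betw_byWitness[where f' = "rev_compl n"]) (auto simp: in_B[symmetric])
  then show ?thesis
    by (simp add: c_count_def A_def B_def bij_betw_same_card)
qed

section \<open>The permutations counted by c_n(231, 1432 : 231)\<close>

definition avoiders :: "nat \<Rightarrow> (nat \<Rightarrow> nat) set" where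
  "avoiders n = {p. p permutes {1..n} \<and> avoids_231 p n \<and> avoids_1432 p n \<and> avoids_231 (p \<circ> p) n}"

lemma c_count_eq_card_avoiders: "c_count n [2, 3, 1] [1, 4, 3, 2] [2, 3, 1] = card (avoiders n)"
proof -
  have "p permutes {1..n} \<and> avoids p n [2, 3, 1] \<and> avoids p n [1, 4, 3, 2] \<and> avoids (p \<circ> p) n [2, 3, 1]
    \<longleftrightarrow> p \<in> avoiders n" for p
  proof (cases "p permutes {1..n}")
    case True
    then have "inj_on p {1..n}" "inj_on (p \<circ> p) {1..n}"
      using permutes_inj_on permutes_compose by blast+
    then show ?thesis
      using True avoids_231_iff avoids_1432_iff unfolding avoiders_def by blast
  qed (simp add: avoiders_def)
  then show ?thesis
    by (simp add: c_count_def)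
qed

lemma finite_avoiders: "finite (avoiders n)"
  by (rule finite_subset[of _ "{p. p permutes {1..n}}"]) (auto simp: avoiders_def finite_permutations)

lemma avoiders_small: "n \<le> 2 \<Longrightarrow> avoiders n = {p. p permutes {1..n}}"
  by (auto simp: avoiders_def avoids_231_def avoids_1432_def)

(* In one-line notation dec_inc n m is n (n-1) ... (m+1) 1 2 ... m. *)
definition dec_inc :: "nat \<Rightarrow> nat \<Rightarrow> nat \<Rightarrow> nat" where
  "dec_inc n m i = (if i \<in> {1..n - m} then n + 1 - i else if i \<in> {n - m<..n} then i - (n - m) else i)"

lemma dec_inc_cases:
  assumes "m \<le> n" and "i \<in> {1..n}"
  shows "i + m \<le> n \<and> dec_inc n m i + i = n + 1 \<or> n < i + m \<and> dec_inc n m i + n = i + m"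
  using assms by (auto simp: dec_inc_def)

lemma dec_inc_range: "m \<le> n \<Longrightarrow> i \<in> {1..n} \<Longrightarrow> dec_inc n m i \<in> {1..n}"
  by (auto simp: dec_inc_def)

lemma dec_inc_permutes:
  assumes "m \<le> n"
  shows "dec_inc n m permutes {1..n}"
proof (rule inj_imp_permutes)
  show "inj_on (dec_inc n m) {1..n}"
  proof (rule inj_onI)
    fix x y assume "x \<in> {1..n}" "y \<in> {1..n}" and "dec_inc n m x = dec_inc n m y"
    with dec_inc_cases[OF assms \<open>x \<in> {1..n}\<close>] dec_inc_cases[OF assms \<open>y \<in> {1..n}\<close>]
    show "x = y" by - (simp only: atLeastAtMost_iff, elim disjE conjE; linarith)
  qed
  show "dec_inc n m x \<in> {1..n}" if "x \<in> {1..n}" for x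
    using dec_inc_range[OF assms that] .
  show "dec_inc n m x = x" if "x \<notin> {1..n}" for x
    using that by (auto simp: dec_inc_def)
qed simp

lemma dec_inc_sq_cases:
  assumes "2 * m \<le> n" and "i \<in> {1..n}"
  shows "i \<le> m \<and> dec_inc n m (dec_inc n m i) + i = m + 1
       \<or> m < i \<and> i + m \<le> n \<and> dec_inc n m (dec_inc n m i) = i
       \<or> n < i + m \<and> dec_inc n m (dec_inc n m i) + i + m = 2 * n + 1"
proof -
  have mn: "m \<le> n"
    using assms by simp
  from dec_inc_cases[OF mn assms(2)] dec_inc_cases[OF mn dec_inc_range[OF mn assms(2)]]
  show ?thesis
    using assms dec_inc_range[OF mn assms(2)] by - (simp only: atLeastAtMost_iff, elim disjE conjE; linarith)
qed

lemma dec_inc_avoids_231: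
  assumes "m \<le> n"
  shows "avoids_231 (dec_inc n m) n"
proof (rule avoids_231I)
  fix a b c assume abc: "1 \<le> a" "a < b" "b < c" "c \<le> n"
    and "dec_inc n m c < dec_inc n m a" "dec_inc n m a < dec_inc n m b"
  moreover have "a \<in> {1..n}" "b \<in> {1..n}" "c \<in> {1..n}"
    using abc by auto
  from this[THEN dec_inc_cases[OF assms]] show False
    using calculation by - (elim disjE conjE; linarith)
qed

lemma dec_inc_avoids_1432:
  assumes "m \<le> n"
  shows "avoids_1432 (dec_inc n m) n"
proof (rule avoids_1432I)
  fix a b c d assume abcd: "1 \<le> a" "a < b" "b < c" "c < d" "d \<le> n"
    and "dec_inc n m a < dec_inc n m d" "dec_inc n m d < dec_inc n m c" "dec_inc n m c < dec_inc n m b"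
  moreover have "a \<in> {1..n}" "b \<in> {1..n}" "c \<in> {1..n}" "d \<in> {1..n}"
    using abcd by auto
  from this[THEN dec_inc_cases[OF assms]] show False
    using calculation by - (elim disjE conjE; linarith)
qed

lemma dec_inc_sq_avoids_231:
  assumes "2 * m \<le> n"
  shows "avoids_231 (dec_inc n m \<circ> dec_inc n m) n"
proof (rule avoids_231I)
  fix a b c assume abc: "1 \<le> a" "a < b" "b < c" "c \<le> n"
    and "(dec_inc n m \<circ> dec_inc n m) c < (dec_inc n m \<circ> dec_inc n m) a"
      "(dec_inc n m \<circ> dec_inc n m) a < (dec_inc n m \<circ> dec_inc n m) b"
  then have "dec_inc n m (dec_inc n m c) < dec_inc n m (dec_inc n m a)"
      "dec_inc n m (dec_inc n m a) < dec_inc n m (dec_inc n m b)"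
    by simp_all
  moreover have "a \<in> {1..n}" "b \<in> {1..n}" "c \<in> {1..n}"
    using abc by auto
  from this[THEN dec_inc_sq_cases[OF assms]] show False
    using calculation abc assms by - (elim disjE conjE; linarith)
qed

lemma dec_inc_in_avoiders:
  assumes "2 * m \<le> n"
  shows "dec_inc n m \<in> avoiders n"
proof -
  have "m \<le> n"
    using assms by simp
  then show ?thesis
    using dec_inc_permutes dec_inc_avoids_231 dec_inc_avoids_1432 dec_inc_sq_avoids_231[OF assms]
    unfolding avoiders_def by blast
qed

lemma dec_inc_first: "m < n \<Longrightarrow> dec_inc n m 1 = n"
  by (auto simp: dec_inc_def)

lemma dec_inc_last: "m \<le> n \<Longrightarrow> 1 \<le> m \<Longrightarrow> dec_inc n m n = m"
  by (simp add: dec_inc_def)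

section \<open>The position of the maximum\<close>

locale permutation_of =
  fixes n :: nat and p :: "nat \<Rightarrow> nat"
  assumes perm: "p permutes {1..n}"
begin

lemma maps_to: "x \<in> {1..n} \<Longrightarrow> p x \<in> {1..n}"
  using permutes_in_image[OF perm] by blast

lemma value_eq_iff: "p x = p y \<longleftrightarrow> x = y"
  using permutes_inj[OF perm] by (simp add: inj_eq)

lemma preimage:
  assumes "y \<in> {1..n}"
  obtains x where "x \<in> {1..n}" "p x = y"
  using assms permutes_image[OF perm] by (metis imageE)

end

locale max_first = permutation_of +
  fixes r :: nat
  assumes av: "avoids_231 p n" and av_sq: "avoids_231 (p \<circ> p) n"
    and first: "p 1 = n" and one: "p r = 1" and two_le: "2 \<le> n"
begin

lemma r_bounds: "2 \<le> r" "r \<le> n"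
proof -
  have "r \<in> {1..n}"
    using permutes_in_image[OF perm, of r] one two_le by simp
  moreover have "r \<noteq> 1"
    using first one two_le by auto
  ultimately show "2 \<le> r" "r \<le> n" by auto
qed

lemma decreasing_before: "1 \<le> a \<Longrightarrow> a < b \<Longrightarrow> b \<le> r \<Longrightarrow> p b < p a"
proof -
  assume ab: "1 \<le> a" "a < b" "b \<le> r"
  have "p a \<noteq> p r" "p a \<in> {1..n}"
    using ab maps_to[of a] r_bounds by (auto simp: value_eq_iff)
  then have "p r < p a"
    using one by auto
  moreover have "\<not> p a < p b" if "b < r"
    using avoids_231D[OF av ab(1,2) that r_bounds(2) \<open>p r < p a\<close>] by blast
  ultimately show "p b < p a"
    using ab value_eq_iff[of a b] by (cases "b = r") auto
qed

lemma sq_separated: "1 \<le> a \<Longrightarrow> a < r \<Longrightarrow> r < c \<Longrightarrow> c \<le> n \<Longrightarrow> p (p a) < p (p c)"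
proof -
  assume ac: "1 \<le> a" "a < r" "r < c" "c \<le> n"
  have "p (p a) \<in> {1..n}" "p (p a) \<noteq> p (p r)"
    using ac maps_to by (auto simp: value_eq_iff)
  then have "(p \<circ> p) a < (p \<circ> p) r"
    using one first by auto
  then have "\<not> p (p c) < p (p a)"
    using avoids_231D[OF av_sq ac] by auto
  moreover have "p (p a) \<noteq> p (p c)"
    using ac by (simp add: value_eq_iff)
  ultimately show "p (p a) < p (p c)"
    by simp
qed

lemma sq_image_before: "(p \<circ> p) ` {1..<r} = {1..<r}"
proof -
  have perm_sq: "(p \<circ> p) permutes {1..n}"
    using permutes_compose[OF perm perm] .
  have inj_sq: "inj (p \<circ> p)"
    using permutes_inj[OF perm_sq] .
  have "(p \<circ> p) ` {1..<r} \<union> (p \<circ> p) ` {r<..n} = (p \<circ> p) ` ({1..n} - {r})"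
    using r_bounds by (auto simp flip: image_Un intro!: arg_cong[where f = "image _"])
  also have "\<dots> = (p \<circ> p) ` {1..n} - (p \<circ> p) ` {r}"
    by (rule image_set_diff[OF inj_sq])
  also have "\<dots> = {1..n} - {n}"
    using permutes_image[OF perm_sq] one first by simp
  also have "\<dots> = {1..n - 1}"
    using two_le by auto
  finally have "(p \<circ> p) ` {1..<r} = {1..<1 + card ((p \<circ> p) ` {1..<r})}"
    by (rule lower_part_eq_interval) (auto intro: sq_separated)
  moreover have "card ((p \<circ> p) ` {1..<r}) = r - 1"
    using card_image[OF inj_on_subset[OF inj_sq subset_UNIV]] by simp
  ultimately show ?thesis
    using r_bounds by simp
qed

lemma sq_before: "1 \<le> a \<Longrightarrow> a < r \<Longrightarrow> p (p a) < r"
  using sq_image_before by auto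

lemma sq_after: "r < c \<Longrightarrow> c \<le> n \<Longrightarrow> r \<le> p (p c)"
proof (rule ccontr)
  assume c: "r < c" "c \<le> n" "\<not> r \<le> p (p c)"
  then have "p (p c) \<in> (p \<circ> p) ` {1..<r}"
    unfolding sq_image_before using maps_to[of c] maps_to[of "p c"] by auto
  then show False
    using c by (auto simp: value_eq_iff)
qed

lemma after_less: "r < c \<Longrightarrow> c \<le> n \<Longrightarrow> p c < r"
proof (rule ccontr)
  assume c: "r < c" "c \<le> n" "\<not> p c < r"
  have "p n < r"
    using sq_before[of 1] r_bounds first by simp
  obtain a where a: "a \<in> {1..n}" "p a = r"
    using preimage[of r] r_bounds by auto
  have "a \<noteq> r"
    using a one r_bounds by auto
  moreover have "\<not> r < a"
    using sq_after[of a] a one r_bounds by auto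
  ultimately have "a < r" by simp
  moreover have "r < p c"
    using c a \<open>a < r\<close> by (cases "p c = r") (auto simp: value_eq_iff)
  moreover have "c < n"
    using c \<open>p n < r\<close> by (cases "c = n") auto
  ultimately show False
    using avoids_231D[OF av, of a c n] a c \<open>p n < r\<close> by simp
qed

lemma after_less_before: "1 \<le> a \<Longrightarrow> a < r \<Longrightarrow> r < c \<Longrightarrow> c \<le> n \<Longrightarrow> p c < p a"
proof (rule ccontr)
  assume ac: "1 \<le> a" "a < r" "r < c" "c \<le> n" "\<not> p c < p a"
  moreover have "p a \<noteq> p c"
    using ac by (simp add: value_eq_iff)
  ultimately have "p a < p c"
    by simp
  moreover have "1 \<le> p a" "p c \<le> r"
    using ac maps_to[of a] after_less[of c] by auto
  ultimately have "p (p c) < p (p a)"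
    using decreasing_before by blast
  then show False
    using sq_before[of a] sq_after[of c] ac by simp
qed

lemma after_image: "p ` {r<..n} = {2..<n - r + 2}"
proof -
  have "p ` {r<..n} \<union> p ` {1..<r} = p ` ({1..n} - {r})"
    using r_bounds by (auto simp flip: image_Un intro!: arg_cong[where f = "image _"])
  also have "\<dots> = p ` {1..n} - p ` {r}"
    by (rule image_set_diff[OF permutes_inj[OF perm]])
  also have "\<dots> = {2..n}"
    using permutes_image[OF perm] one by auto
  finally have "p ` {r<..n} = {2..<2 + card (p ` {r<..n})}"
    by (rule lower_part_eq_interval) (auto intro: after_less_before)
  moreover have "card (p ` {r<..n}) = n - r"
    using card_image[OF inj_on_subset[OF permutes_inj[OF perm] subset_UNIV]] by simp
  ultimately show ?thesis
    by simp
qed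

lemma n_le_two_r: "n + 2 \<le> 2 * r"
proof -
  have "p ` {r<..n} \<subseteq> {2..<r}"
  proof
    fix x assume x: "x \<in> p ` {r<..n}"
    then have "2 \<le> x"
      using after_image by auto
    with x show "x \<in> {2..<r}"
      using after_less by auto
  qed
  then have "card (p ` {r<..n}) \<le> card {2..<r}"
    by (rule card_mono[rotated]) simp
  then show ?thesis
    using after_image r_bounds by simp
qed

lemma value_before: "1 \<le> i \<Longrightarrow> i < r \<Longrightarrow> p i = n + 1 - i"
proof -
  assume i: "1 \<le> i" "i < r"
  define g where "g j = p (r - j)" for j
  have "strict_mono_on {1..r - 1} g"
    by (rule strict_mono_onI) (auto simp: g_def intro!: decreasing_before)
  moreover have "g j \<in> {n - r + 2..n - r + 2 + (r - 1 - 1)}" if "j \<in> {1..r - 1}" for j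
  proof -
    have "p (r - j) \<notin> p ` {r<..n}" "p (r - j) \<noteq> p r"
      using that by (auto simp: value_eq_iff)
    moreover have "p (r - j) \<in> {1..n}"
      using that r_bounds by (intro maps_to) auto
    ultimately show ?thesis
      using that after_image one r_bounds by (auto simp: g_def)
  qed
  ultimately have "g (r - i) = n - r + 2 + (r - i - 1)"
    by (rule strict_mono_on_onto_interval) (use i in auto)
  then show "p i = n + 1 - i"
    using i r_bounds by (simp add: g_def)
qed

lemma value_mirror: "r \<le> x \<Longrightarrow> x \<le> n \<Longrightarrow> p (n + 1 - x) = x"
  using value_before[of "n + 1 - x"] n_le_two_r by simp

(* The positions n + 1 - x with r \<le> x \<le> n lie before r and p maps them to x, so a descent of
   p after r would be a 231 of p \<circ> p before r. *)
lemma increasing_after: "r < b \<Longrightarrow> b < c \<Longrightarrow> c \<le> n \<Longrightarrow> p b < p c"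
proof (rule ccontr)
  assume bc: "r < b" "b < c" "c \<le> n" "\<not> p b < p c"
  moreover have "p b \<noteq> p c" "p c \<noteq> p r" "p c \<in> {1..n}"
    using bc maps_to[of c] by (auto simp: value_eq_iff)
  ultimately have "p c < p b" "1 < p c"
    using one by auto
  moreover have "(p \<circ> p) (n + 1 - x) = p x" if "x \<in> {r..n}" for x
    using value_mirror that by simp
  ultimately have "(p \<circ> p) (n + 1 - r) < (p \<circ> p) (n + 1 - c)"
    "(p \<circ> p) (n + 1 - c) < (p \<circ> p) (n + 1 - b)"
    using bc r_bounds one by auto
  moreover have "1 \<le> n + 1 - c" "n + 1 - c < n + 1 - b" "n + 1 - b < n + 1 - r" "n + 1 - r \<le> n"
    using bc r_bounds by auto
  ultimately show False
    using avoids_231D[OF av_sq] by blast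
qed

lemma value_after: "r < i \<Longrightarrow> i \<le> n \<Longrightarrow> p i = i + 1 - r"
proof -
  assume i: "r < i" "i \<le> n"
  have "strict_mono_on {r + 1..n} p"
    by (rule strict_mono_onI) (auto intro: increasing_after)
  moreover have "p j \<in> {2..2 + (n - (r + 1))}" if "j \<in> {r + 1..n}" for j
  proof -
    have "p j \<in> p ` {r<..n}"
      using that by auto
    then have "p j \<in> {2..<n - r + 2}"
      unfolding after_image .
    then show ?thesis
      using that by auto
  qed
  ultimately have "p i = 2 + (i - (r + 1))"
    by (rule strict_mono_on_onto_interval) (use i in auto)
  then show "p i = i + 1 - r"
    using i by simp
qed

lemma eq_dec_inc: "p = dec_inc n (n + 1 - r)"
proof
  fix x
  have "n - (n + 1 - r) = r - 1"
    using r_bounds by simp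
  then show "p x = dec_inc n (n + 1 - r) x"
    using value_before[of x] value_after[of x] one r_bounds permutes_not_in[OF perm, of x]
    by (cases "x < r"; cases "x = r"; auto simp: dec_inc_def)
qed

end

locale max_inside = permutation_of +
  fixes k :: nat
  assumes av: "avoids_231 p n" and av_1432: "avoids_1432 p n" and av_sq: "avoids_231 (p \<circ> p) n"
    and max: "p k = n" and k_bounds: "1 < k" "k < n"
begin

lemma below_max: "x \<in> {1..n} \<Longrightarrow> x \<noteq> k \<Longrightarrow> p x < n"
  using maps_to[of x] value_eq_iff[of x k] max by auto

lemma left_below_right: "1 \<le> a \<Longrightarrow> a < k \<Longrightarrow> k < c \<Longrightarrow> c \<le> n \<Longrightarrow> p a < p c"
proof -
  assume ac: "1 \<le> a" "a < k" "k < c" "c \<le> n"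
  have "p a < p k"
    using below_max[of a] ac k_bounds max by simp
  then have "\<not> p c < p a"
    using avoids_231D[OF av ac] by blast
  moreover have "p a \<noteq> p c"
    using ac by (simp add: value_eq_iff)
  ultimately show "p a < p c"
    by simp
qed

lemma increasing_right: "k < c \<Longrightarrow> c < e \<Longrightarrow> e \<le> n \<Longrightarrow> p c < p e"
proof -
  assume ce: "k < c" "c < e" "e \<le> n"
  have "p 1 < p e" "p c < p k"
    using left_below_right[of 1 e] below_max[of c] ce k_bounds max by auto
  then have "\<not> p e < p c"
    using avoids_1432D[OF av_1432, of 1 k c e] ce k_bounds by auto
  moreover have "p c \<noteq> p e"
    using ce by (simp add: value_eq_iff)
  ultimately show "p c < p e"
    by simp
qed

lemma last_value: "p n = n - 1"
proof -
  have "n - 1 \<in> {1..n}"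
    using k_bounds by auto
  then obtain y where y: "y \<in> {1..n}" "p y = n - 1"
    by (rule preimage)
  have "y \<noteq> k"
    using y max k_bounds by auto
  have "p n < n"
    using below_max[of n] k_bounds by simp
  show ?thesis
  proof (rule ccontr)
    assume "p n \<noteq> n - 1"
    then have "y \<noteq> n"
      using y by auto
    then have "p y < p n"
      using y \<open>y \<noteq> k\<close> left_below_right[of y n] increasing_right[of y n] k_bounds
      by (cases "y < k") auto
    then show False
      using y \<open>p n < n\<close> by simp
  qed
qed

lemma max_position: "k = n - 1"
proof (rule ccontr)
  assume "k \<noteq> n - 1"
  then have kn: "k + 1 < n"
    using k_bounds by simp
  have "strict_mono_on {k + 1..n} p"
    by (rule strict_mono_onI) (auto intro: increasing_right)
  then have "p (k + 1) + (n - (k + 1)) \<le> p n"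
    by (rule strict_mono_on_gap) (use kn in auto)
  then have "p (k + 1) \<le> k"
    using last_value kn by simp
  have "k \<in> {1..n}"
    using k_bounds by auto
  then obtain y where y: "y \<in> {1..n}" "p y = k"
    by (rule preimage)
  have "y \<noteq> k" "y \<noteq> n"
    using y max last_value kn by auto
  moreover have "\<not> y < k"
    using left_below_right[of y "k + 1"] y kn \<open>p (k + 1) \<le> k\<close> by auto
  ultimately have "k < y" "y < n"
    using y by auto
  moreover have "p (n - 1) < p n"
    using increasing_right[of "n - 1" n] kn by simp
  \<comment> \<open>at the positions k < y < n the square takes the values n - 1, n and p (n - 1) < n - 1\<close>
  ultimately show False
    using avoids_231D[OF av_sq, of k y n] y max last_value k_bounds by simp
qed

end

lemma avoiders_max_first:
  assumes "p \<in> avoiders n" and "p 1 = n" and "2 \<le> n"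
  shows "\<exists>m\<in>{1..n div 2}. p = dec_inc n m"
proof -
  interpret permutation_of n p
    using assms(1) by unfold_locales (simp add: avoiders_def)
  obtain r where "p r = 1"
    using preimage[of 1] assms(3) by auto
  then interpret max_first n p r
    using assms by unfold_locales (auto simp: avoiders_def)
  show ?thesis
    using eq_dec_inc n_le_two_r r_bounds by (intro bexI[of _ "n + 1 - r"]) auto
qed

lemma avoiders_max_inside:
  assumes "p \<in> avoiders n" and "p k = n" and "1 < k" "k < n"
  shows "k = n - 1" and "p n = n - 1"
proof -
  interpret max_inside n p k
    using assms by unfold_locales (auto simp: avoiders_def)
  show "k = n - 1" "p n = n - 1"
    using max_position last_value by simp_all
qed

lemma avoiders_max_first_eq:
  assumes "2 \<le> n"
  shows "{p \<in> avoiders n. p 1 = n} = dec_inc n ` {1..n div 2}"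
proof
  show "{p \<in> avoiders n. p 1 = n} \<subseteq> dec_inc n ` {1..n div 2}"
    using avoiders_max_first[OF _ _ assms] by blast
  show "dec_inc n ` {1..n div 2} \<subseteq> {p \<in> avoiders n. p 1 = n}"
    using dec_inc_in_avoiders dec_inc_first by auto
qed

lemma card_dec_inc_image: "card (dec_inc n ` {1..n div 2}) = n div 2"
proof -
  have "dec_inc n m n = m" if "m \<in> {1..n div 2}" for m
    using that by (intro dec_inc_last) auto
  then have "inj_on (dec_inc n) {1..n div 2}"
    by (metis inj_onI)
  then show ?thesis
    by (simp add: card_image)
qed

section \<open>The recurrence\<close>

lemma permutes_fix_last_iff:
  "p permutes {1..Suc n} \<and> p (Suc n) = Suc n \<longleftrightarrow> p permutes {1..n}"
proof
  assume p: "p permutes {1..Suc n} \<and> p (Suc n) = Suc n"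
  then have "p x = x" if "x \<in> {1..Suc n} - {1..n}" for x
    using that by (auto simp: le_Suc_eq)
  then show "p permutes {1..n}"
    using permutes_superset p by blast
next
  assume "p permutes {1..n}"
  then show "p permutes {1..Suc n} \<and> p (Suc n) = Suc n"
    by (auto intro: permutes_subset permutes_not_in)
qed

lemma avoiders_fix_last: "{p \<in> avoiders (Suc n). p (Suc n) = Suc n} = avoiders n"
proof -
  have "p \<in> avoiders (Suc n) \<longleftrightarrow> p \<in> avoiders n" if perm: "p permutes {1..n}" for p
  proof -
    have head: "p x \<le> n" "p (p x) \<le> n" if "x \<in> {1..n}" for x
      using that permutes_in_image[OF perm] by auto
    have tail: "y = Suc n" "p y = Suc n" if "y \<in> {n<..Suc n}" for y
      using that permutes_not_in[OF perm] by auto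
    have "avoids_231 p (Suc n) \<longleftrightarrow> avoids_231 p n"
      by (rule avoids_231_high_tail) (use head tail in auto)
    moreover have "avoids_1432 p (Suc n) \<longleftrightarrow> avoids_1432 p n"
      by (rule avoids_1432_high_tail) (use head tail in auto)
    moreover have "avoids_231 (p \<circ> p) (Suc n) \<longleftrightarrow> avoids_231 (p \<circ> p) n"
      by (rule avoids_231_high_tail) (use head tail in auto)
    ultimately show ?thesis
      using perm permutes_subset[OF perm, of "{1..Suc n}"] by (auto simp: avoiders_def)
  qed
  then show ?thesis
    using permutes_fix_last_iff by (auto simp: avoiders_def)
qed

lemma permutes_swap_tail_iff:
  "p permutes {1..Suc (Suc n)} \<and> p (Suc n) = Suc (Suc n) \<and> p (Suc (Suc n)) = Suc n
     \<longleftrightarrow> transpose (Suc n) (Suc (Suc n)) \<circ> p permutes {1..n}"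
  (is "?shape \<longleftrightarrow> ?t \<circ> p permutes _")
proof
  assume p: ?shape
  have "?t permutes {1..Suc (Suc n)}"
    by (rule permutes_swap_id) auto
  then have "?t \<circ> p permutes {1..Suc (Suc n)}"
    using p permutes_compose by blast
  moreover have "(?t \<circ> p) x = x" if "x \<in> {1..Suc (Suc n)} - {1..n}" for x
    using that p by (auto simp: le_Suc_eq)
  ultimately show "?t \<circ> p permutes {1..n}"
    using permutes_superset by blast
next
  assume q: "?t \<circ> p permutes {1..n}"
  have p: "p = ?t \<circ> (?t \<circ> p)"
    by (simp add: o_assoc)
  have "?t permutes {1..Suc (Suc n)}"
    by (rule permutes_swap_id) auto
  moreover have "?t \<circ> p permutes {1..Suc (Suc n)}"
    using q by (rule permutes_subset) auto
  ultimately have "p permutes {1..Suc (Suc n)}"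
    using p permutes_compose by metis
  moreover have "p (Suc n) = ?t (Suc n)" "p (Suc (Suc n)) = ?t (Suc (Suc n))"
    using permutes_not_in[OF q] by (subst p; simp)+
  ultimately show ?shape
    by simp
qed

lemma avoiders_swap_tail_iff:
  assumes shape: "p permutes {1..Suc (Suc n)}" "p (Suc n) = Suc (Suc n)" "p (Suc (Suc n)) = Suc n"
  shows "p \<in> avoiders (Suc (Suc n)) \<longleftrightarrow> transpose (Suc n) (Suc (Suc n)) \<circ> p \<in> avoiders n"
proof -
  define q where "q = transpose (Suc n) (Suc (Suc n)) \<circ> p"
  have q: "q permutes {1..n}"
    using permutes_swap_tail_iff shape unfolding q_def by blast
  have "p = transpose (Suc n) (Suc (Suc n)) \<circ> q"
    by (simp add: q_def o_assoc)
  then have head: "p x = q x" "q x \<le> n" "p (p x) = q (q x)" "q (q x) \<le> n" if "x \<in> {1..n}" for x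
    using that permutes_in_image[OF q, of x] permutes_in_image[OF q, of "q x"] by auto
  have tail: "n < p y" "p (p y) = y" if "y \<in> {n<..Suc (Suc n)}" for y
    using that shape by (auto simp: le_Suc_eq)
  have "avoids_231 p (Suc (Suc n)) \<longleftrightarrow> avoids_231 p n"
    by (rule avoids_231_high_tail) (use head tail in auto)
  moreover have "avoids_231 p n \<longleftrightarrow> avoids_231 q n"
    by (rule avoids_231_cong) (use head in auto)
  moreover have "avoids_1432 p (Suc (Suc n)) \<longleftrightarrow> avoids_1432 p n"
    by (rule avoids_1432_high_tail) (use head tail in auto)
  moreover have "avoids_1432 p n \<longleftrightarrow> avoids_1432 q n"
    by (rule avoids_1432_cong) (use head in auto)
  moreover have "avoids_231 (p \<circ> p) (Suc (Suc n)) \<longleftrightarrow> avoids_231 (p \<circ> p) n"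
    by (rule avoids_231_high_tail) (use head tail in auto)
  moreover have "avoids_231 (p \<circ> p) n \<longleftrightarrow> avoids_231 (q \<circ> q) n"
    by (rule avoids_231_cong) (use head in auto)
  ultimately show ?thesis
    using shape q by (simp add: avoiders_def q_def)
qed

lemma avoiders_swap_tail:
  "{p \<in> avoiders (Suc (Suc n)). p (Suc n) = Suc (Suc n) \<and> p (Suc (Suc n)) = Suc n}
     = (\<lambda>q. transpose (Suc n) (Suc (Suc n)) \<circ> q) ` avoiders n"
  (is "?L = (\<lambda>q. ?t \<circ> q) ` _")
proof
  show "?L \<subseteq> (\<lambda>q. ?t \<circ> q) ` avoiders n"
  proof
    fix p assume "p \<in> ?L"
    then have "?t \<circ> p \<in> avoiders n"
      using avoiders_swap_tail_iff by (auto simp: avoiders_def)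
    moreover have "p = ?t \<circ> (?t \<circ> p)"
      by (simp add: o_assoc)
    ultimately show "p \<in> (\<lambda>q. ?t \<circ> q) ` avoiders n"
      by blast
  qed
  show "(\<lambda>q. ?t \<circ> q) ` avoiders n \<subseteq> ?L"
  proof
    fix p assume "p \<in> (\<lambda>q. ?t \<circ> q) ` avoiders n"
    then obtain q where q: "q \<in> avoiders n" "p = ?t \<circ> q"
      by blast
    then have "?t \<circ> p = q"
      by (simp add: o_assoc)
    then have "?t \<circ> p permutes {1..n}"
      using q(1) by (simp add: avoiders_def)
    then have "p permutes {1..Suc (Suc n)} \<and> p (Suc n) = Suc (Suc n) \<and> p (Suc (Suc n)) = Suc n"
      using permutes_swap_tail_iff by blast
    then show "p \<in> ?L"
      using avoiders_swap_tail_iff \<open>?t \<circ> p = q\<close> q by auto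
  qed
qed

lemma avoiders_split_max:
  assumes "1 \<le> n"
  shows "avoiders (Suc (Suc n)) =
      {p \<in> avoiders (Suc (Suc n)). p 1 = Suc (Suc n)}
    \<union> {p \<in> avoiders (Suc (Suc n)). p (Suc n) = Suc (Suc n) \<and> p (Suc (Suc n)) = Suc n}
    \<union> {p \<in> avoiders (Suc (Suc n)). p (Suc (Suc n)) = Suc (Suc n)}"
proof -
  have "p 1 = Suc (Suc n) \<or> p (Suc n) = Suc (Suc n) \<and> p (Suc (Suc n)) = Suc n
      \<or> p (Suc (Suc n)) = Suc (Suc n)"
    if p: "p \<in> avoiders (Suc (Suc n))" for p
  proof -
    have "p permutes {1..Suc (Suc n)}"
      using p unfolding avoiders_def by blast
    then have "Suc (Suc n) \<in> p ` {1..Suc (Suc n)}"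
      by (simp add: permutes_image)
    then obtain k where k: "k \<in> {1..Suc (Suc n)}" "p k = Suc (Suc n)"
      by (rule imageE) simp
    show ?thesis
    proof (cases "k = 1 \<or> k = Suc (Suc n)")
      case True
      then show ?thesis
        using k by auto
    next
      case False
      then have "1 < k" "k < Suc (Suc n)"
        using k(1) by auto
      then show ?thesis
        using avoiders_max_inside[OF p k(2)] k(2) by auto
    qed
  qed
  then show ?thesis
    by auto
qed

lemma card_avoiders_split_max:
  assumes "1 \<le> n"
  shows "card (avoiders (Suc (Suc n))) =
      card {p \<in> avoiders (Suc (Suc n)). p 1 = Suc (Suc n)}
    + card {p \<in> avoiders (Suc (Suc n)). p (Suc n) = Suc (Suc n) \<and> p (Suc (Suc n)) = Suc n}
    + card {p \<in> avoiders (Suc (Suc n)). p (Suc (Suc n)) = Suc (Suc n)}"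
proof -
  let ?N = "Suc (Suc n)"
  define F S L where "F = {p \<in> avoiders ?N. p 1 = ?N}"
    and "S = {p \<in> avoiders ?N. p (Suc n) = ?N \<and> p ?N = Suc n}"
    and "L = {p \<in> avoiders ?N. p ?N = ?N}"
  have distinct: "p 1 \<noteq> p (Suc n)" "p 1 \<noteq> p ?N" "p (Suc n) \<noteq> p ?N" if "p \<in> avoiders ?N" for p
  proof -
    have "inj p"
      using that permutes_inj unfolding avoiders_def by blast
    then show "p 1 \<noteq> p (Suc n)" "p 1 \<noteq> p ?N" "p (Suc n) \<noteq> p ?N"
      using assms by (auto simp: inj_eq)
  qed
  have "F \<inter> S = {}"
  proof (rule equals0I)
    fix p assume "p \<in> F \<inter> S"
    then have "p \<in> avoiders ?N" "p 1 = p (Suc n)"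
      unfolding F_def S_def by auto
    then show False
      using distinct(1) by blast
  qed
  moreover have "(F \<union> S) \<inter> L = {}"
  proof (rule equals0I)
    fix p assume "p \<in> (F \<union> S) \<inter> L"
    then have "p \<in> avoiders ?N" "p 1 = p ?N \<or> p (Suc n) = p ?N"
      unfolding F_def S_def L_def by auto
    then show False
      using distinct(2,3) by blast
  qed
  moreover have "finite F" "finite S" "finite L"
    using finite_avoiders[of ?N] unfolding F_def S_def L_def by auto
  moreover have "avoiders ?N = F \<union> S \<union> L"
    unfolding F_def S_def L_def by (rule avoiders_split_max[OF assms])
  ultimately show ?thesis
    unfolding F_def [symmetric] S_def [symmetric] L_def [symmetric] by (simp add: card_Un_disjoint)
qed

lemma card_avoiders_Suc_Suc:
  assumes "1 \<le> n"
  shows "card (avoiders (Suc (Suc n))) = card (avoiders (Suc n)) + card (avoiders n) + Suc (Suc n) div 2"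
proof -
  let ?t = "transpose (Suc n) (Suc (Suc n))"
  have "card {p \<in> avoiders (Suc (Suc n)). p 1 = Suc (Suc n)} = Suc (Suc n) div 2"
    using avoiders_max_first_eq[of "Suc (Suc n)"] card_dec_inc_image[of "Suc (Suc n)"] by simp
  moreover have "inj_on (\<lambda>q. ?t \<circ> q) (avoiders n)"
    by (rule inj_on_inverseI[where g = "\<lambda>q. ?t \<circ> q"]) (simp add: o_assoc)
  then have "card {p \<in> avoiders (Suc (Suc n)). p (Suc n) = Suc (Suc n) \<and> p (Suc (Suc n)) = Suc n}
      = card (avoiders n)"
    unfolding avoiders_swap_tail by (rule card_image)
  ultimately show ?thesis
    using card_avoiders_split_max[OF assms] avoiders_fix_last[of "Suc n"] by simp
qed

lemma card_avoiders_lucas: "1 \<le> n \<Longrightarrow> card (avoiders n) + (n + 1) div 2 + 1 = lucas (n + 1)"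
proof (induction n rule: less_induct)
  case (less n)
  consider "n = 1" | "n = 2" | "3 \<le> n"
    using less.prems by linarith
  then show ?case
  proof cases
    case 1
    have "lucas 2 = 3"
      by (simp add: numeral_eq_Suc)
    then show ?thesis
      using 1 card_permutations[of "{1..1::nat}" 1] avoiders_small[of 1] by simp
  next
    case 2
    have "lucas 3 = 4"
      by (simp add: numeral_eq_Suc)
    then show ?thesis
      using 2 card_permutations[of "{1..2::nat}" 2] avoiders_small[of 2] by simp
  next
    case 3
    define m where "m = n - 2"
    have n: "n = Suc (Suc m)" "1 \<le> m"
      using 3 by (simp_all add: m_def)
    have "card (avoiders (Suc m)) + (m + 2) div 2 + 1 = lucas (m + 2)"
      "card (avoiders m) + (m + 1) div 2 + 1 = lucas (m + 1)"
      using less.IH[of "Suc m"] less.IH[of m] n by simp_all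
    moreover have "(m + 3) div 2 = (m + 1) div 2 + 1"
      by simp
    ultimately show ?thesis
      using card_avoiders_Suc_Suc[OF n(2)] n by (simp add: numeral_eq_Suc)
  qed
qed

lemma ceiling_half: "\<lceil>real n / 2\<rceil> = int ((n + 1) div 2)"
proof -
  have "\<lceil>real n / 2\<rceil> = - (- int n div 2)"
    using ceiling_divide_eq_div[of "int n" 2] by simp
  also have "\<dots> = (int n + 1) div 2"
    by presburger
  finally show ?thesis
    by (simp add: zdiv_int)
qed

theorem theorem4p1:
  fixes n :: nat
  assumes "n \<ge> 1"
  shows "int (c_count n [2,3,1] [1,4,3,2] [2,3,1]) = int (c_count n [3,1,2] [3,2,1,4] [3,1,2])
       \<and> int (c_count n [3,1,2] [3,2,1,4] [3,1,2]) = int (lucas (n + 1)) - ceiling (real n / 2) - 1"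
proof -
  have "c_count n [3,1,2] [3,2,1,4] [3,1,2] = c_count n [2,3,1] [1,4,3,2] [2,3,1]"
    using c_count_rev_compl[of "[2,3,1]" "[1,4,3,2]" "[2,3,1]" n]
    by (simp add: pattern_rev_compl_def numeral_eq_Suc)
  moreover have "int (card (avoiders n)) = int (lucas (n + 1)) - int ((n + 1) div 2) - 1"
    using arg_cong[OF card_avoiders_lucas[OF assms], of int] by simp
  ultimately show ?thesis
    using c_count_eq_card_avoiders ceiling_half by simp
qed

end
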